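(* Let $d\ge 1$ be an integer and let $f\in C([-\tfrac12,\tfrac12]^d)$ satisfy $f(\mathbf{0})=0$, and suppose there is a constant $c>0$ such that $|f(x_1,\dots,x_d)|\ge c$ for every $\mathbf{x}=(x_1,\dots,x_d)\in[-\tfrac12,\tfrac12]^d$ having $x_j=\tfrac12$ for at least one index $1\le j\le d$. Then for any activation function $\sigma:\mathbb{R}\to\mathbb{R}$ and any fixed depth $L\ge1$, $\sigma$ networks with width less than $d$ and depth $L$ cannot approximate $f$ with arbitrary accuracy; that is, there exists $\epsilon>0$ such that no $\sigma$ network $\phi$ of depth $L$ and width $N<d$ satisfies $|f(\mathbf{x})-\phi(\mathbf{x})|<\epsilon$ for all $\mathbf{x}\in[-\tfrac12,\tfrac12]^d$.
   Context: For an activation function $\sigma:\mathbb{R}\to\mathbb{R}$, a $\sigma$ network with depth $L\in\mathbb{N}$ is a function $\phi:\mathbb{R}^d\to\mathbb{R}$ of the form $$\phi=\mathcal{L}_L\circ\sigma\circ\mathcal{L}_{L-1}\circ\sigma\circ\cdots\circ\sigma\circ\mathcal{L}_1\circ\sigma\circ\mathcal{L}_0,$$ where $\mathcal{L}_i(\mathbf{y})=\mathbf{W}_i\mathbf{y}+\mathbf{b}_i$ with $\mathbf{W}_i\in\mathbb{R}^{N_{i+1}\times N_i}$, $\mathbf{b}_i\in\mathbb{R}^{N_{i+1}}$, $N_0=d$, $N_{L+1}=1$, and $\sigma$ is applied componentwise to vectors. If $N_i=N$ for all $1\le i\le L$, the network is said to have width $N$. *)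

theory Defs
  imports "HOL-Analysis.Analysis"
begin

text \<open>The input dimension d is CARD('n); points of R^d are vectors of type real^'n.\<close>

definition half_cube :: "(real^'n) set" where
  "half_cube = {x. \<forall>i. x$i \<in> {-1/2..1/2}}"

text \<open>Layer L_0 : R^d -> R^N has weights W0 (j,k) and bias b0 j (j < N).
  Layer L_i (1 <= i <= L) has weights W i j k (k < N) and bias b i j;
  L_i : R^N -> R^N for i < L, and L_L : R^N -> R^1 (row 0).
  hidden ... i is the vector sigma(L_i(... sigma(L_0 x))) (the (i+1)-th hidden layer);
  only components j < N are relevant.\<close>

primrec hidden ::
  "(real \<Rightarrow> real) \<Rightarrow> nat \<Rightarrow> (nat \<Rightarrow> 'n \<Rightarrow> real) \<Rightarrow> (nat \<Rightarrow> real) \<Rightarrow>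
   (nat \<Rightarrow> nat \<Rightarrow> nat \<Rightarrow> real) \<Rightarrow> (nat \<Rightarrow> nat \<Rightarrow> real) \<Rightarrow> real^'n::finite \<Rightarrow> nat \<Rightarrow> nat \<Rightarrow> real"
where
  "hidden \<sigma> N W0 b0 W b x 0 = (\<lambda>j. \<sigma> ((\<Sum>k\<in>UNIV. W0 j k * x$k) + b0 j))"
| "hidden \<sigma> N W0 b0 W b x (Suc i) =
     (\<lambda>j. \<sigma> ((\<Sum>k<N. W (Suc i) j k * hidden \<sigma> N W0 b0 W b x i k) + b (Suc i) j))"

definition net_out ::
  "(real \<Rightarrow> real) \<Rightarrow> nat \<Rightarrow> nat \<Rightarrow> (nat \<Rightarrow> 'n \<Rightarrow> real) \<Rightarrow> (nat \<Rightarrow> real) \<Rightarrow>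
   (nat \<Rightarrow> nat \<Rightarrow> nat \<Rightarrow> real) \<Rightarrow> (nat \<Rightarrow> nat \<Rightarrow> real) \<Rightarrow> real^'n::finite \<Rightarrow> real"
where
  "net_out \<sigma> L N W0 b0 W b x =
     (\<Sum>k<N. W L 0 k * hidden \<sigma> N W0 b0 W b x (L - 1) k) + b L 0"

definition sigma_nets :: "(real \<Rightarrow> real) \<Rightarrow> nat \<Rightarrow> nat \<Rightarrow> (real^'n::finite \<Rightarrow> real) set" where
  "sigma_nets \<sigma> L N = {\<phi>. \<exists>W0 b0 W b. \<phi> = net_out \<sigma> L N W0 b0 W b}"

end

theory Submission
  imports Defs
begin

text \<open>A network of width N < d factors through its first affine layer R^d \<rightarrow> R^N, whose linear
  part has a nonzero kernel vector v; hence the network takes the same value at 0 and at every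
  multiple of v. Rescaling v so that its largest coordinate becomes 1/2 gives a point u of the
  face of the cube with \<bar>f u - f 0\<bar> \<ge> c, so no such network approximates f within c/2.\<close>

lemma hidden_cong_first_layer:
  assumes "\<And>j. j < N \<Longrightarrow> (\<Sum>k\<in>UNIV. W0 j k * x$k) = (\<Sum>k\<in>UNIV. W0 j k * y$k)"
    and "m < N"
  shows "hidden \<sigma> N W0 b0 W b x i m = hidden \<sigma> N W0 b0 W b y i m"
  using assms(2)
proof (induction i arbitrary: m)
  case 0
  then show ?case using assms(1) by simp
next
  case (Suc i)
  then show ?case
    unfolding hidden.simps by (intro arg_cong[where f=\<sigma>] arg_cong2[where f="(+)"] sum.cong) auto
qed

lemma net_out_cong_first_layer:
  assumes "\<And>j. j < N \<Longrightarrow> (\<Sum>k\<in>UNIV. W0 j k * x$k) = (\<Sum>k\<in>UNIV. W0 j k * y$k)"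
  shows "net_out \<sigma> L N W0 b0 W b x = net_out \<sigma> L N W0 b0 W b y"
  unfolding net_out_def using hidden_cong_first_layer[OF assms] by simp

lemma net_out_scaleR_kernel:
  assumes "\<And>j. j < N \<Longrightarrow> (\<Sum>k\<in>UNIV. W0 j k * v$k) = 0"
  shows "net_out \<sigma> L N W0 b0 W b (t *\<^sub>R v) = net_out \<sigma> L N W0 b0 W b 0"
proof (rule net_out_cong_first_layer)
  fix j assume "j < N"
  have "(\<Sum>k\<in>UNIV. W0 j k * (t *\<^sub>R v)$k) = t * (\<Sum>k\<in>UNIV. W0 j k * v$k)"
    by (simp add: sum_distrib_left algebra_simps)
  then show "(\<Sum>k\<in>UNIV. W0 j k * (t *\<^sub>R v)$k) = (\<Sum>k\<in>UNIV. W0 j k * (0::real^'a)$k)"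
    using assms[OF \<open>j < N\<close>] by simp
qed

lemma exists_nonzero_orthogonal_to_fewer:
  fixes w :: "nat \<Rightarrow> 'a::euclidean_space"
  assumes "N < DIM('a)"
  obtains v where "v \<noteq> 0" "\<And>j. j < N \<Longrightarrow> v \<bullet> w j = 0"
proof -
  have "dim (w ` {..<N}) \<le> card (w ` {..<N})"
    by (rule dim_le_card[OF span_superset finite_imageI[OF finite_lessThan]])
  also have "\<dots> \<le> N"
    using card_image_le[of "{..<N}" w] by simp
  finally have "dim (w ` {..<N}) < DIM('a)"
    using assms by simp
  then obtain v where "v \<noteq> 0" "\<And>y. y \<in> span (w ` {..<N}) \<Longrightarrow> orthogonal v y"
    using orthogonal_to_subspace_exists by blast
  then show ?thesis
    by (intro that[of v]) (auto simp: orthogonal_def intro: span_base)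
qed

lemma scaleR_in_half_cube_face:
  fixes v :: "real^'n"
  assumes "v \<noteq> 0"
  obtains t j where "t *\<^sub>R v \<in> half_cube" "(t *\<^sub>R v)$j = 1/2"
proof -
  have "Max (range (\<lambda>i. \<bar>v$i\<bar>)) \<in> range (\<lambda>i. \<bar>v$i\<bar>)"
    by (rule Max_in) auto
  then obtain j where "\<bar>v$j\<bar> = Max (range (\<lambda>i. \<bar>v$i\<bar>))"
    by (metis imageE)
  then have max: "\<bar>v$i\<bar> \<le> \<bar>v$j\<bar>" for i
    by simp
  have "v$j \<noteq> 0"
  proof
    assume "v$j = 0"
    then have "v$i = 0" for i
      using max[of i] by simp
    then show False
      using assms by (simp add: vec_eq_iff)
  qed
  define t where "t = 1 / (2 * v$j)"
  have bound: "\<bar>(t *\<^sub>R v)$i\<bar> \<le> 1/2" for i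
    using max[of i] \<open>v$j \<noteq> 0\<close> by (simp add: t_def abs_mult field_simps)
  have "-1/2 \<le> (t *\<^sub>R v)$i \<and> (t *\<^sub>R v)$i \<le> 1/2" for i
    using bound[of i] by arith
  then have "t *\<^sub>R v \<in> half_cube"
    unfolding half_cube_def by simp
  moreover have "(t *\<^sub>R v)$j = 1/2"
    using \<open>v$j \<noteq> 0\<close> by (simp add: t_def)
  ultimately show ?thesis
    by (rule that)
qed

theorem theorem3p2:
  fixes f :: "real^'n \<Rightarrow> real" and c :: real and \<sigma> :: "real \<Rightarrow> real" and L :: nat
  assumes "continuous_on half_cube f"
    and "f 0 = 0"
    and "c > 0"
    and "\<forall>x\<in>half_cube. (\<exists>j. x$j = 1/2) \<longrightarrow> \<bar>f x\<bar> \<ge> c"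
    and "L \<ge> 1"
  shows "\<exists>\<epsilon>>0. \<forall>N. N < CARD('n) \<longrightarrow>
           (\<forall>\<phi>\<in>sigma_nets \<sigma> L N. \<not> (\<forall>x\<in>half_cube. \<bar>f x - \<phi> x\<bar> < \<epsilon>))"
proof (intro exI[of _ "c/2"] conjI allI impI ballI notI)
  show "c/2 > 0"
    using assms(3) by simp
  fix N \<phi> assume "N < CARD('n)" and "\<phi> \<in> sigma_nets \<sigma> L N"
    and approx: "\<forall>x\<in>half_cube. \<bar>f x - \<phi> x\<bar> < c/2"
  then obtain W0 b0 W b where \<phi>: "\<phi> = net_out \<sigma> L N W0 b0 W b"
    unfolding sigma_nets_def by blast
  have "N < DIM(real^'n)"
    using \<open>N < CARD('n)\<close> by simp
  then obtain v :: "real^'n" where "v \<noteq> 0" and "\<And>j. j < N \<Longrightarrow> v \<bullet> (\<chi> k. W0 j k) = 0"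
    using exists_nonzero_orthogonal_to_fewer[of N "\<lambda>j. \<chi> k. W0 j k"] by blast
  then have kernel: "\<And>j. j < N \<Longrightarrow> (\<Sum>k\<in>UNIV. W0 j k * v$k) = 0"
    by (simp add: inner_vec_def mult.commute)
  obtain t j where face: "t *\<^sub>R v \<in> half_cube" "(t *\<^sub>R v)$j = 1/2"
    using scaleR_in_half_cube_face[OF \<open>v \<noteq> 0\<close>] .
  have "\<phi> (t *\<^sub>R v) = \<phi> 0"
    unfolding \<phi> by (rule net_out_scaleR_kernel[OF kernel])
  moreover have "0 \<in> half_cube"
    unfolding half_cube_def by simp
  then have "\<bar>f 0 - \<phi> 0\<bar> < c/2"
    using approx by blast
  moreover have "\<bar>f (t *\<^sub>R v) - \<phi> (t *\<^sub>R v)\<bar> < c/2"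
    using approx face(1) by blast
  moreover have "\<bar>f (t *\<^sub>R v)\<bar> \<ge> c"
    using assms(4) face by blast
  ultimately show False
    using assms(2) by linarith
qed

end
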